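(* Let $X$ be a nonempty set and $G\le S_X$. If $G$ is rack admissible then $\bigcup_{x\in X/G}(C_G(G_x))^G$ generates $G$. If $G$ is quandle admissible then $\bigcup_{x\in X/G}Z(G_x)^G$ generates $G$.
   Context: Permutations act on the right; for a subset $H\subseteq G$ and $g\in G$, $H^g=g^{-1}Hg$ and $H^G=\bigcup_{g\in G}H^g$. For $G\le S_X$, $G_x$ is the stabilizer of $x$, and $X/G$ a complete set of orbit representatives; $C_G(H)$ is the centralizer and $Z(H)$ the center. A rack is a groupoid $(X,* )$ whose left translations $L_x$ ($y\mapsto x*y$) are bijections and which satisfies $x*(y*z)=(x*y)*(x*z)$; a quandle is a rack with $x*x=x$. $\mathrm{LMlt}(X,* )=\langle L_x:x\in X\rangle$. A subgroup $G\le S_X$ is rack admissible (resp. quandle admissible) if there is a rack (resp. quandle) $(X,* )$ with $\mathrm{LMlt}(X,* )=G$. *)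

theory Defs
  imports "HOL-Algebra.Algebra"
begin

text \<open>Permutations of Y are the elements of BijGroup Y (extensional bijections of Y).
  The action of g on x is g x.\<close>

definition is_rack :: "'a set \<Rightarrow> ('a \<Rightarrow> 'a \<Rightarrow> 'a) \<Rightarrow> bool" where
  "is_rack Y rk \<longleftrightarrow>
     (\<forall>x\<in>Y. \<forall>y\<in>Y. rk x y \<in> Y) \<and>
     (\<forall>x\<in>Y. bij_betw (rk x) Y Y) \<and>
     (\<forall>x\<in>Y. \<forall>y\<in>Y. \<forall>z\<in>Y. rk x (rk y z) = rk (rk x y) (rk x z))"

definition is_quandle :: "'a set \<Rightarrow> ('a \<Rightarrow> 'a \<Rightarrow> 'a) \<Rightarrow> bool" where
  "is_quandle Y rk \<longleftrightarrow> is_rack Y rk \<and> (\<forall>x\<in>Y. rk x x = x)"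

definition left_transl :: "'a set \<Rightarrow> ('a \<Rightarrow> 'a \<Rightarrow> 'a) \<Rightarrow> 'a \<Rightarrow> ('a \<Rightarrow> 'a)" where
  "left_transl Y rk x = restrict (rk x) Y"

definition LMlt :: "'a set \<Rightarrow> ('a \<Rightarrow> 'a \<Rightarrow> 'a) \<Rightarrow> ('a \<Rightarrow> 'a) set" where
  "LMlt Y rk = generate (BijGroup Y) (left_transl Y rk ` Y)"

definition rack_admissible :: "'a set \<Rightarrow> ('a \<Rightarrow> 'a) set \<Rightarrow> bool" where
  "rack_admissible Y G \<longleftrightarrow> (\<exists>rk. is_rack Y rk \<and> LMlt Y rk = G)"

definition quandle_admissible :: "'a set \<Rightarrow> ('a \<Rightarrow> 'a) set \<Rightarrow> bool" where
  "quandle_admissible Y G \<longleftrightarrow> (\<exists>rk. is_quandle Y rk \<and> LMlt Y rk = G)"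

definition perm_stabilizer :: "'a set \<Rightarrow> ('a \<Rightarrow> 'a) set \<Rightarrow> 'a \<Rightarrow> ('a \<Rightarrow> 'a) set" where
  "perm_stabilizer Y G x = {g \<in> G. g x = x}"

definition perm_centralizer :: "'a set \<Rightarrow> ('a \<Rightarrow> 'a) set \<Rightarrow> ('a \<Rightarrow> 'a) set \<Rightarrow> ('a \<Rightarrow> 'a) set" where
  "perm_centralizer Y G H =
     {g \<in> G. \<forall>h\<in>H. g \<otimes>\<^bsub>BijGroup Y\<^esub> h = h \<otimes>\<^bsub>BijGroup Y\<^esub> g}"

definition perm_center :: "'a set \<Rightarrow> ('a \<Rightarrow> 'a) set \<Rightarrow> ('a \<Rightarrow> 'a) set" where
  "perm_center Y H = {h \<in> H. \<forall>k\<in>H. h \<otimes>\<^bsub>BijGroup Y\<^esub> k = k \<otimes>\<^bsub>BijGroup Y\<^esub> h}"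

definition conj_closure :: "'a set \<Rightarrow> ('a \<Rightarrow> 'a) set \<Rightarrow> ('a \<Rightarrow> 'a) set \<Rightarrow> ('a \<Rightarrow> 'a) set" where
  "conj_closure Y G H =
     {inv\<^bsub>BijGroup Y\<^esub> g \<otimes>\<^bsub>BijGroup Y\<^esub> h \<otimes>\<^bsub>BijGroup Y\<^esub> g | g h. g \<in> G \<and> h \<in> H}"

definition orbit_reps :: "'a set \<Rightarrow> ('a \<Rightarrow> 'a) set \<Rightarrow> 'a set \<Rightarrow> bool" where
  "orbit_reps Y G R \<longleftrightarrow> R \<subseteq> Y \<and> (\<forall>x\<in>Y. \<exists>!r. r \<in> R \<and> (\<exists>g\<in>G. g r = x))"

end

theory Submission
  imports Defs
begin

text \<open>Self-distributivity says exactly that each \<open>L\<^sub>z\<close> conjugates \<open>L\<^sub>x\<close> into \<open>L\<^bsub>z*x\<^esub>\<close>;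
  since the permutations \<open>g\<close> with \<open>g L\<^sub>x g\<inverse> = L\<^bsub>g x\<^esub>\<close> for all \<open>x\<close> form a subgroup, this
  holds for every \<open>g \<in> G = LMlt(X,*)\<close>. Taking \<open>g \<in> G\<^sub>x\<close> shows that \<open>L\<^sub>x\<close> centralizes
  \<open>G\<^sub>x\<close> (and lies in \<open>G\<^sub>x\<close> for a quandle), while taking \<open>g\<close> with \<open>g x = y\<close> exhibits every
  generator \<open>L\<^sub>y\<close> as a conjugate of \<open>L\<^sub>x\<close> for the orbit representative \<open>x\<close> of \<open>y\<close>.\<close>

lemma BijGroup_mult_apply:
  assumes "f \<in> carrier (BijGroup Y)" "g \<in> carrier (BijGroup Y)" "x \<in> Y"
  shows "(f \<otimes>\<^bsub>BijGroup Y\<^esub> g) x = f (g x)"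
  using assms by (simp add: BijGroup_def compose_def)

lemma BijGroup_one_apply: "x \<in> Y \<Longrightarrow> \<one>\<^bsub>BijGroup Y\<^esub> x = x"
  by (simp add: BijGroup_def)

lemma BijGroup_apply_in: "f \<in> carrier (BijGroup Y) \<Longrightarrow> x \<in> Y \<Longrightarrow> f x \<in> Y"
  by (auto simp: BijGroup_def Bij_def bij_betw_def)

lemma BijGroup_apply_inv:
  assumes "f \<in> carrier (BijGroup Y)" "x \<in> Y"
  shows "f ((inv\<^bsub>BijGroup Y\<^esub> f) x) = x"
proof -
  interpret B: group "BijGroup Y" by (rule group_BijGroup)
  have "f ((inv\<^bsub>BijGroup Y\<^esub> f) x) = (f \<otimes>\<^bsub>BijGroup Y\<^esub> inv\<^bsub>BijGroup Y\<^esub> f) x"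
    by (rule BijGroup_mult_apply[symmetric]) (use assms in simp_all)
  also have "\<dots> = \<one>\<^bsub>BijGroup Y\<^esub> x"
    using assms by simp
  finally show ?thesis using assms by (simp add: BijGroup_one_apply)
qed

lemma BijGroup_eqI:
  assumes "f \<in> carrier (BijGroup Y)" "g \<in> carrier (BijGroup Y)" "\<And>x. x \<in> Y \<Longrightarrow> f x = g x"
  shows "f = g"
  using assms by (auto simp: BijGroup_def Bij_def intro: extensionalityI)

lemma left_transl_in_BijGroup:
  assumes "is_rack Y rk" "x \<in> Y"
  shows "left_transl Y rk x \<in> carrier (BijGroup Y)"
proof -
  have "bij_betw (rk x) Y Y" using assms unfolding is_rack_def by blast
  then have "bij_betw (restrict (rk x) Y) Y Y"
    by (metis bij_betw_cong restrict_apply')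
  then show ?thesis unfolding left_transl_def BijGroup_def Bij_def by simp
qed

lemma left_transl_in_LMlt: "x \<in> Y \<Longrightarrow> left_transl Y rk x \<in> LMlt Y rk"
  unfolding LMlt_def by (blast intro: generate.incl)

definition conj_equivariant :: "'a set \<Rightarrow> ('a \<Rightarrow> 'a \<Rightarrow> 'a) \<Rightarrow> ('a \<Rightarrow> 'a) set" where
  "conj_equivariant Y L =
     {g \<in> carrier (BijGroup Y). \<forall>x\<in>Y. g \<otimes>\<^bsub>BijGroup Y\<^esub> L x = L (g x) \<otimes>\<^bsub>BijGroup Y\<^esub> g}"

lemma conj_equivariant_mult:
  assumes L: "L ` Y \<subseteq> carrier (BijGroup Y)"
    and g: "g \<in> conj_equivariant Y L" and h: "h \<in> conj_equivariant Y L"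
  shows "g \<otimes>\<^bsub>BijGroup Y\<^esub> h \<in> conj_equivariant Y L"
proof -
  interpret B: group "BijGroup Y" by (rule group_BijGroup)
  have gC: "g \<in> carrier (BijGroup Y)" and hC: "h \<in> carrier (BijGroup Y)"
    using g h unfolding conj_equivariant_def by blast+
  have "g \<otimes>\<^bsub>BijGroup Y\<^esub> h \<otimes>\<^bsub>BijGroup Y\<^esub> L x
      = L ((g \<otimes>\<^bsub>BijGroup Y\<^esub> h) x) \<otimes>\<^bsub>BijGroup Y\<^esub> (g \<otimes>\<^bsub>BijGroup Y\<^esub> h)" if x: "x \<in> Y" for x
  proof -
    have hx: "h x \<in> Y" using hC x by (rule BijGroup_apply_in)
    have ghx: "g (h x) \<in> Y" using gC hx by (rule BijGroup_apply_in)
    have "g \<otimes>\<^bsub>BijGroup Y\<^esub> h \<otimes>\<^bsub>BijGroup Y\<^esub> L x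
        = g \<otimes>\<^bsub>BijGroup Y\<^esub> (L (h x) \<otimes>\<^bsub>BijGroup Y\<^esub> h)"
      using h gC hC x L by (simp add: conj_equivariant_def B.m_assoc image_subset_iff)
    also have "\<dots> = L (g (h x)) \<otimes>\<^bsub>BijGroup Y\<^esub> g \<otimes>\<^bsub>BijGroup Y\<^esub> h"
      using g gC hC hx L by (simp add: conj_equivariant_def B.m_assoc[symmetric] image_subset_iff)
    finally show ?thesis
      using gC hC x ghx L by (simp add: B.m_assoc BijGroup_mult_apply image_subset_iff)
  qed
  then show ?thesis
    unfolding conj_equivariant_def using gC hC by blast
qed

lemma conj_equivariant_inv:
  assumes L: "L ` Y \<subseteq> carrier (BijGroup Y)" and g: "g \<in> conj_equivariant Y L"
  shows "inv\<^bsub>BijGroup Y\<^esub> g \<in> conj_equivariant Y L"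
proof -
  interpret B: group "BijGroup Y" by (rule group_BijGroup)
  let ?g' = "inv\<^bsub>BijGroup Y\<^esub> g"
  have gC: "g \<in> carrier (BijGroup Y)" using g unfolding conj_equivariant_def by blast
  have "?g' \<otimes>\<^bsub>BijGroup Y\<^esub> L x = L (?g' x) \<otimes>\<^bsub>BijGroup Y\<^esub> ?g'" if x: "x \<in> Y" for x
  proof -
    have y: "?g' x \<in> Y" using gC x by (simp add: BijGroup_apply_in)
    have eq: "g \<otimes>\<^bsub>BijGroup Y\<^esub> L (?g' x) = L x \<otimes>\<^bsub>BijGroup Y\<^esub> g"
      using g y BijGroup_apply_inv[OF gC x] unfolding conj_equivariant_def by simp
    have "L (?g' x) \<otimes>\<^bsub>BijGroup Y\<^esub> ?g'
        = ?g' \<otimes>\<^bsub>BijGroup Y\<^esub> (g \<otimes>\<^bsub>BijGroup Y\<^esub> L (?g' x)) \<otimes>\<^bsub>BijGroup Y\<^esub> ?g'"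
      using gC y L by (simp add: B.m_assoc[symmetric] image_subset_iff)
    also have "\<dots> = ?g' \<otimes>\<^bsub>BijGroup Y\<^esub> L x"
      using gC x L by (simp add: eq B.m_assoc image_subset_iff)
    finally show ?thesis by simp
  qed
  then show ?thesis
    unfolding conj_equivariant_def using gC by simp
qed

lemma subgroup_conj_equivariant:
  assumes L: "L ` Y \<subseteq> carrier (BijGroup Y)"
  shows "subgroup (conj_equivariant Y L) (BijGroup Y)"
proof
  show "conj_equivariant Y L \<subseteq> carrier (BijGroup Y)"
    unfolding conj_equivariant_def by blast
  show "\<one>\<^bsub>BijGroup Y\<^esub> \<in> conj_equivariant Y L"
    unfolding conj_equivariant_def using L group.is_monoid[OF group_BijGroup]
    by (auto simp: BijGroup_one_apply)
qed (use L in \<open>auto intro: conj_equivariant_mult conj_equivariant_inv\<close>)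

lemma rack_left_transl_mult:
  assumes r: "is_rack Y rk" and z: "z \<in> Y" and x: "x \<in> Y"
  shows "left_transl Y rk z \<otimes>\<^bsub>BijGroup Y\<^esub> left_transl Y rk x
       = left_transl Y rk (rk z x) \<otimes>\<^bsub>BijGroup Y\<^esub> left_transl Y rk z"
proof -
  interpret B: group "BijGroup Y" by (rule group_BijGroup)
  have LC: "left_transl Y rk y \<in> carrier (BijGroup Y)" if "y \<in> Y" for y
    using r that by (rule left_transl_in_BijGroup)
  have zx: "rk z x \<in> Y" using r z x unfolding is_rack_def by blast
  show ?thesis
  proof (rule BijGroup_eqI)
    fix w assume w: "w \<in> Y"
    have xw: "rk x w \<in> Y" and zw: "rk z w \<in> Y" using r x z w unfolding is_rack_def by blast+
    have "(left_transl Y rk z \<otimes>\<^bsub>BijGroup Y\<^esub> left_transl Y rk x) w = rk z (rk x w)"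
      using LC x z w xw by (simp add: BijGroup_mult_apply left_transl_def)
    also have "\<dots> = rk (rk z x) (rk z w)"
      using r x z w unfolding is_rack_def by blast
    also have "\<dots> = (left_transl Y rk (rk z x) \<otimes>\<^bsub>BijGroup Y\<^esub> left_transl Y rk z) w"
      using LC z zx w zw by (simp add: BijGroup_mult_apply left_transl_def)
    finally show "(left_transl Y rk z \<otimes>\<^bsub>BijGroup Y\<^esub> left_transl Y rk x) w
        = (left_transl Y rk (rk z x) \<otimes>\<^bsub>BijGroup Y\<^esub> left_transl Y rk z) w" .
  qed (use LC z x zx in simp_all)
qed

lemma left_transl_conj_equivariant:
  assumes r: "is_rack Y rk" and z: "z \<in> Y"
  shows "left_transl Y rk z \<in> conj_equivariant Y (left_transl Y rk)"
  using rack_left_transl_mult[OF r z] left_transl_in_BijGroup[OF r z]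
  unfolding conj_equivariant_def by (simp add: left_transl_def)

lemma LMlt_conj_left_transl:
  assumes r: "is_rack Y rk" and g: "g \<in> LMlt Y rk" and x: "x \<in> Y"
  shows "g \<otimes>\<^bsub>BijGroup Y\<^esub> left_transl Y rk x = left_transl Y rk (g x) \<otimes>\<^bsub>BijGroup Y\<^esub> g"
proof -
  have "LMlt Y rk \<subseteq> conj_equivariant Y (left_transl Y rk)"
    unfolding LMlt_def
  proof (rule group.generate_subgroup_incl[OF group_BijGroup])
    show "left_transl Y rk ` Y \<subseteq> conj_equivariant Y (left_transl Y rk)"
      using r by (auto intro: left_transl_conj_equivariant)
    show "subgroup (conj_equivariant Y (left_transl Y rk)) (BijGroup Y)"
      by (rule subgroup_conj_equivariant) (use r in \<open>auto intro: left_transl_in_BijGroup\<close>)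
  qed
  then show ?thesis using g x unfolding conj_equivariant_def by blast
qed

lemma subgroup_LMlt: "is_rack Y rk \<Longrightarrow> subgroup (LMlt Y rk) (BijGroup Y)"
  unfolding LMlt_def
  by (rule group.generate_is_subgroup[OF group_BijGroup]) (auto intro: left_transl_in_BijGroup)

lemma left_transl_in_centralizer_stabilizer:
  assumes r: "is_rack Y rk" and x: "x \<in> Y"
  shows "left_transl Y rk x \<in> perm_centralizer Y (LMlt Y rk) (perm_stabilizer Y (LMlt Y rk) x)"
  using left_transl_in_LMlt[OF x] LMlt_conj_left_transl[OF r _ x]
  unfolding perm_centralizer_def perm_stabilizer_def by fastforce

lemma left_transl_in_center_stabilizer:
  assumes q: "is_quandle Y rk" and x: "x \<in> Y"
  shows "left_transl Y rk x \<in> perm_center Y (perm_stabilizer Y (LMlt Y rk) x)"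
proof -
  have r: "is_rack Y rk" using q unfolding is_quandle_def by blast
  have "left_transl Y rk x x = x" using q x unfolding is_quandle_def left_transl_def by simp
  then have "left_transl Y rk x \<in> perm_stabilizer Y (LMlt Y rk) x"
    unfolding perm_stabilizer_def using left_transl_in_LMlt[OF x] by blast
  then show ?thesis
    using left_transl_in_centralizer_stabilizer[OF r x]
    unfolding perm_center_def perm_centralizer_def by blast
qed

lemma conj_closure_subset:
  assumes "subgroup G (BijGroup Y)" "H \<subseteq> G"
  shows "conj_closure Y G H \<subseteq> G"
proof
  fix f assume "f \<in> conj_closure Y G H"
  then obtain g h where "g \<in> G" "h \<in> H"
    and f: "f = inv\<^bsub>BijGroup Y\<^esub> g \<otimes>\<^bsub>BijGroup Y\<^esub> h \<otimes>\<^bsub>BijGroup Y\<^esub> g"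
    unfolding conj_closure_def by blast
  then show "f \<in> G"
    using assms by (simp add: subset_iff subgroup.m_closed subgroup.m_inv_closed)
qed

lemma left_transl_in_conj_closure:
  assumes r: "is_rack Y rk" and g: "g \<in> LMlt Y rk" and x: "x \<in> Y"
    and H: "left_transl Y rk x \<in> H"
  shows "left_transl Y rk (g x) \<in> conj_closure Y (LMlt Y rk) H"
proof -
  interpret B: group "BijGroup Y" by (rule group_BijGroup)
  have sub: "subgroup (LMlt Y rk) (BijGroup Y)" using r by (rule subgroup_LMlt)
  have gC: "g \<in> carrier (BijGroup Y)" using subgroup.subset[OF sub] g by blast
  have gxC: "left_transl Y rk (g x) \<in> carrier (BijGroup Y)"
    using r BijGroup_apply_in[OF gC x] by (rule left_transl_in_BijGroup)
  have "left_transl Y rk (g x)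
      = left_transl Y rk (g x) \<otimes>\<^bsub>BijGroup Y\<^esub> g \<otimes>\<^bsub>BijGroup Y\<^esub> inv\<^bsub>BijGroup Y\<^esub> g"
    using gC gxC by (simp add: B.m_assoc)
  also have "\<dots> = inv\<^bsub>BijGroup Y\<^esub> (inv\<^bsub>BijGroup Y\<^esub> g)
      \<otimes>\<^bsub>BijGroup Y\<^esub> left_transl Y rk x \<otimes>\<^bsub>BijGroup Y\<^esub> inv\<^bsub>BijGroup Y\<^esub> g"
    using gC by (simp add: LMlt_conj_left_transl[OF r g x])
  finally have "left_transl Y rk (g x) = inv\<^bsub>BijGroup Y\<^esub> (inv\<^bsub>BijGroup Y\<^esub> g)
      \<otimes>\<^bsub>BijGroup Y\<^esub> left_transl Y rk x \<otimes>\<^bsub>BijGroup Y\<^esub> inv\<^bsub>BijGroup Y\<^esub> g" .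
  with subgroup.m_inv_closed[OF sub g] H show ?thesis
    unfolding conj_closure_def by blast
qed

lemma generate_conj_closure_eq_LMlt:
  assumes r: "is_rack Y rk" and R: "orbit_reps Y (LMlt Y rk) R"
    and H: "\<And>x. x \<in> R \<Longrightarrow> H x \<subseteq> LMlt Y rk \<and> left_transl Y rk x \<in> H x"
  shows "generate (BijGroup Y) (\<Union>x\<in>R. conj_closure Y (LMlt Y rk) (H x)) = LMlt Y rk"
proof -
  interpret B: group "BijGroup Y" by (rule group_BijGroup)
  let ?S = "\<Union>x\<in>R. conj_closure Y (LMlt Y rk) (H x)"
  have sub: "subgroup (LMlt Y rk) (BijGroup Y)" using r by (rule subgroup_LMlt)
  have S: "?S \<subseteq> LMlt Y rk"
    using conj_closure_subset[OF sub] H by (simp add: UN_subset_iff)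
  have "left_transl Y rk ` Y \<subseteq> ?S"
  proof
    fix l assume "l \<in> left_transl Y rk ` Y"
    then obtain y where y: "y \<in> Y" and l: "l = left_transl Y rk y" by blast
    obtain x g where x: "x \<in> R" and g: "g \<in> LMlt Y rk" and gx: "g x = y"
      using R y unfolding orbit_reps_def by blast
    have "x \<in> Y" using R x unfolding orbit_reps_def by blast
    then have "l \<in> conj_closure Y (LMlt Y rk) (H x)"
      using left_transl_in_conj_closure[OF r g] H[OF x] l gx by blast
    then show "l \<in> ?S" using x by blast
  qed
  then have "generate (BijGroup Y) (left_transl Y rk ` Y) \<subseteq> generate (BijGroup Y) ?S"
    using S subgroup.subset[OF sub]
    by (intro B.generate_subgroup_incl B.generate_is_subgroup) (blast intro: generate.incl)+
  then have "LMlt Y rk \<subseteq> generate (BijGroup Y) ?S"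
    by (simp only: LMlt_def[symmetric])
  moreover have "generate (BijGroup Y) ?S \<subseteq> LMlt Y rk"
    using S sub by (rule B.generate_subgroup_incl)
  ultimately show ?thesis by blast
qed

theorem proposition3p7:
  fixes Y :: "'a set" and G :: "('a \<Rightarrow> 'a) set" and R :: "'a set"
  assumes "Y \<noteq> {}"
    and "subgroup G (BijGroup Y)"
    and "orbit_reps Y G R"
  shows "(rack_admissible Y G \<longrightarrow>
           generate (BijGroup Y)
             (\<Union>x\<in>R. conj_closure Y G (perm_centralizer Y G (perm_stabilizer Y G x))) = G)
       \<and> (quandle_admissible Y G \<longrightarrow>
           generate (BijGroup Y)
             (\<Union>x\<in>R. conj_closure Y G (perm_center Y (perm_stabilizer Y G x))) = G)"
proof -
  have RY: "R \<subseteq> Y" using assms(3) unfolding orbit_reps_def by blast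
  show ?thesis
  proof (intro conjI impI)
    assume "rack_admissible Y G"
    then obtain rk where r: "is_rack Y rk" and G: "G = LMlt Y rk"
      unfolding rack_admissible_def by blast
    have "perm_centralizer Y G K \<subseteq> G" for K unfolding perm_centralizer_def by blast
    then show "generate (BijGroup Y)
        (\<Union>x\<in>R. conj_closure Y G (perm_centralizer Y G (perm_stabilizer Y G x))) = G"
      unfolding G using assms(3) RY left_transl_in_centralizer_stabilizer[OF r]
      by (intro generate_conj_closure_eq_LMlt[OF r]) (auto simp: G)
  next
    assume "quandle_admissible Y G"
    then obtain rk where q: "is_quandle Y rk" and G: "G = LMlt Y rk"
      unfolding quandle_admissible_def by blast
    then have r: "is_rack Y rk" unfolding is_quandle_def by blast
    have "perm_center Y (perm_stabilizer Y G x) \<subseteq> G" for x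
      unfolding perm_center_def perm_stabilizer_def by blast
    then show "generate (BijGroup Y)
        (\<Union>x\<in>R. conj_closure Y G (perm_center Y (perm_stabilizer Y G x))) = G"
      unfolding G using assms(3) RY left_transl_in_center_stabilizer[OF q]
      by (intro generate_conj_closure_eq_LMlt[OF r]) (auto simp: G)
  qed
qed

end
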